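(* Consider the system (S) below with all parameters $b_1,b_2,b_3,a_{11},a_{12},a_{13},a_{21},a_{23},a_{31},a_{32}>0$ and $c>0$, and assume $a_{31}b_1>a_{11}b_3$. Then $$E_2=\Big(x_2,0,z_2\Big),\qquad x_2=\frac{b_3}{a_{31}},\quad z_2=\frac{b_1-a_{11}x_2}{a_{13}}>0,$$ is an equilibrium of (S), and if $a_{31}b_2>a_{21}b_3$ then $E_2$ is locally asymptotically stable (all eigenvalues of the Jacobian matrix of (S) at $E_2$ have negative real parts).
   Context: Let $x,y,z\ge 0$ denote prey, intermediate predator and top predator densities. The system (S), an intraguild predation Lotka–Volterra model with top-predator feeding switching of intensity $c$, is $$\dot x=(b_1-a_{11}x)x-a_{12}xy-\frac{a_{13}x^2z}{x+cy},\qquad \dot y=-b_2y+a_{21}xy-\frac{a_{23}y^2z}{y+cx},\qquad \dot z=-b_3z+\frac{a_{31}x^2z}{x+cy}+\frac{a_{32}y^2z}{y+cx},$$ defined on the closed nonnegative orthant minus the origin (where $x+cy>0$ and $y+cx>0$), the right-hand side being smooth in a neighbourhood of every equilibrium with $x>0$. (The fractions are the switching terms $\frac{a_{13}xz}{1+cy/x}$ etc. written with cleared denominators.) *)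

theory Defs
  imports "HOL-Analysis.Analysis"
begin

text \<open>Away from the domain (where a denominator vanishes) the division convention x/0 = 0 applies;
  this is irrelevant near equilibria with x > 0.\<close>
definition igp_field ::
  "real \<Rightarrow> real \<Rightarrow> real \<Rightarrow> real \<Rightarrow> real \<Rightarrow> real \<Rightarrow> real \<Rightarrow> real \<Rightarrow> real \<Rightarrow> real \<Rightarrow> real
   \<Rightarrow> real^3 \<Rightarrow> real^3" where
  "igp_field b1 b2 b3 a11 a12 a13 a21 a23 a31 a32 c u =
     (let x = u$1; y = u$2; z = u$3 in
      (\<chi> i. if i = 1 then (b1 - a11*x)*x - a12*x*y - a13*x^2*z / (x + c*y)
            else if i = 2 then - b2*y + a21*x*y - a23*y^2*z / (y + c*x)
            else - b3*z + a31*x^2*z / (x + c*y) + a32*y^2*z / (y + c*x)))"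

definition pt3 :: "real \<Rightarrow> real \<Rightarrow> real \<Rightarrow> real^3" where
  "pt3 x y z = (\<chi> i. if i = 1 then x else if i = 2 then y else z)"

definition cmatrix :: "(real^3 \<Rightarrow> real^3) \<Rightarrow> complex^3^3" where
  "cmatrix J = (\<chi> i j. complex_of_real (matrix J $ i $ j))"

end

theory Submission imports Defs begin

(* E2 = (x2, 0, z2) lies on the face y = 0 of the orthant, where the switching terms
   are smooth because x > 0.  We compute the Jacobian of (S) at an arbitrary point
   (x, 0, z) with x > 0 (it is defined below as igp_jacobian_face); its second row is
   (0, a21 x - b2, 0).  At E2 the equilibrium relations a31 x2 = b3 and
   a13 z2 = b1 - a11 x2 turn it into
        [ -a11 x2    p            -a13 x2 ]
        [  0         a21 x2 - b2   0      ]
        [  a31 z2    r             0      ].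
   Hence an eigenvalue is either a21 x2 - b2 < 0 (this is where a31 b2 > a21 b3 is
   used), or it is an eigenvalue of the 2x2 block formed by rows/columns 1 and 3,
   i.e. a root of mu^2 + a11 x2 mu + a13 a31 x2 z2, whose roots have negative real
   part by the degree-two Routh-Hurwitz criterion.  Uniqueness of the derivative
   lets us transfer this from our explicit Jacobian to any derivative J of (S). *)

lemma quadratic_root_Re_neg:
  fixes mu :: complex and A B :: real
  assumes "A > 0" "B > 0" and root: "mu^2 + A*mu + B = 0"
  shows "Re mu < 0"
proof -
  obtain a b where mu: "mu = Complex a b" by (cases mu)
  from root have re: "a^2 - b^2 + A*a + B = 0" and im: "(2*a + A) * b = 0"
    by (auto simp: mu complex_eq_iff power2_eq_square algebra_simps)
  show ?thesis
  proof (cases "b = 0")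
    case True
    \<comment> \<open>a real root: a nonnegative a would make the polynomial strictly positive\<close>
    have "a \<ge> 0 \<Longrightarrow> a^2 + A*a + B > 0" using assms
      by (simp add: add_nonneg_pos add_pos_nonneg)
    with re True show ?thesis by (fastforce simp: mu)
  next
    case False
    \<comment> \<open>a non-real root has real part -A/2\<close>
    with im have "2*a + A = 0" by simp
    with assms show ?thesis by (simp add: mu)
  qed
qed

text \<open>Eigenvalues of a 3x3 matrix of the sign pattern of the Jacobian at E2
  (row 2 diagonal, zero (3,3) entry) have negative real part: the middle
  coordinate either fixes mu = q < 0, or vanishes and leaves the 2x2 block
  [[-A, -B], [C, 0]] with characteristic polynomial mu^2 + A mu + B C.\<close>
lemma eigenvalue_Re_neg:
  fixes mu w1 w2 w3 :: complex and A B C p q r :: real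
  assumes pos: "A > 0" "B > 0" "C > 0" "q < 0"
    and row1: "p*w2 - A*w1 - B*w3 = mu*w1"
    and row2: "q*w2 = mu*w2"
    and row3: "C*w1 + r*w2 = mu*w3"
    and nonzero: "w1 \<noteq> 0 \<or> w2 \<noteq> 0 \<or> w3 \<noteq> 0"
  shows "Re mu < 0"
proof (cases "w2 = 0")
  case False
  with row2 have "mu = q" by simp
  with pos show ?thesis by simp
next
  case True
  with row1 row3 have block1: "mu*w1 = -(A*w1) - B*w3" and block3: "C*w1 = mu*w3"
    by simp_all
  have "w1 \<noteq> 0"
    using nonzero True block1 pos by auto
  have "(mu^2 + A*mu + B*C) * w1 = mu*(mu*w1) + A*(mu*w1) + B*(C*w1)"
    by (simp add: algebra_simps power2_eq_square)
  also have "\<dots> = mu*(-(A*w1) - B*w3) + A*(mu*w1) + B*(mu*w3)"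
    by (simp only: block1 block3)
  also have "\<dots> = 0"
    using block1 by (simp add: algebra_simps)
  finally have "mu^2 + A*mu + (B*C) = 0"
    using \<open>w1 \<noteq> 0\<close> by simp
  then show ?thesis
    using quadratic_root_Re_neg[of A "B*C" mu] pos by simp
qed

lemma cmatrix_mult_nth:
  "(cmatrix J *v v) $ i = (\<Sum>j\<in>UNIV. complex_of_real (J (axis j 1) $ i) * v $ j)"
  by (simp add: cmatrix_def matrix_def matrix_vector_mult_def)

lemma vec_nth_has_derivative[derivative_intros]:
  "((\<lambda>u::real^'n. u $ i) has_derivative (\<lambda>h. h $ i)) F"
  using bounded_linear_vec_nth[of i] bounded_linear_imp_has_derivative by blast

lemma has_derivative_vec3:
  fixes f :: "'a::real_normed_vector \<Rightarrow> real^3"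
  assumes "\<And>i. ((\<lambda>x. f x $ i) has_derivative (\<lambda>h. f' h $ i)) (at a)"
  shows "(f has_derivative f') (at a)"
proof (subst has_derivative_componentwise_within, intro ballI)
  fix b :: "real^3" assume "b \<in> Basis"
  then obtain i where b: "b = axis i 1" using axis_inverse by blast
  have "\<And>v::real^3. v \<bullet> b = v $ i" unfolding b by (simp add: inner_axis)
  then show "((\<lambda>x. f x \<bullet> b) has_derivative (\<lambda>x. f' x \<bullet> b)) (at a)"
    using assms by simp
qed

lemma pt3_nth[simp]: "pt3 x y z $ 1 = x" "pt3 x y z $ 2 = y" "pt3 x y z $ 3 = z"
  by (simp_all add: pt3_def)

lemma igp_field_nth:
  "igp_field b1 b2 b3 a11 a12 a13 a21 a23 a31 a32 c u $ 1 =
     (b1 - a11*u$1)*u$1 - a12*u$1*u$2 - a13*(u$1)^2*u$3 / (u$1 + c*u$2)"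
  "igp_field b1 b2 b3 a11 a12 a13 a21 a23 a31 a32 c u $ 2 =
     - b2*u$2 + a21*u$1*u$2 - a23*(u$2)^2*u$3 / (u$2 + c*u$1)"
  "igp_field b1 b2 b3 a11 a12 a13 a21 a23 a31 a32 c u $ 3 =
     - b3*u$3 + a31*(u$1)^2*u$3 / (u$1 + c*u$2) + a32*(u$2)^2*u$3 / (u$2 + c*u$1)"
  by (simp_all add: igp_field_def Let_def)

text \<open>The Jacobian of (S) at a point (x, 0, z).  Since y = 0, the terms carrying
  a23 and a32 are quadratic in y and drop out.\<close>
definition igp_jacobian_face ::
  "real \<Rightarrow> real \<Rightarrow> real \<Rightarrow> real \<Rightarrow> real \<Rightarrow> real \<Rightarrow> real \<Rightarrow> real \<Rightarrow> real \<Rightarrow> real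
   \<Rightarrow> real \<Rightarrow> real^3 \<Rightarrow> real^3" where
  "igp_jacobian_face b1 b2 b3 a11 a12 a13 a21 a31 c x z =
     (\<lambda>h. \<chi> i. if i = 1 then (b1 - 2*a11*x - a13*z)*h$1 + (a13*c*z - a12*x)*h$2 - a13*x*h$3
               else if i = 2 then (a21*x - b2)*h$2
               else a31*z*h$1 - a31*c*z*h$2 + (a31*x - b3)*h$3)"

lemma igp_jacobian_face_nth:
  "igp_jacobian_face b1 b2 b3 a11 a12 a13 a21 a31 c x z h $ 1 =
     (b1 - 2*a11*x - a13*z)*h$1 + (a13*c*z - a12*x)*h$2 - a13*x*h$3"
  "igp_jacobian_face b1 b2 b3 a11 a12 a13 a21 a31 c x z h $ 2 = (a21*x - b2)*h$2"
  "igp_jacobian_face b1 b2 b3 a11 a12 a13 a21 a31 c x z h $ 3 =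
     a31*z*h$1 - a31*c*z*h$2 + (a31*x - b3)*h$3"
  by (simp_all add: igp_jacobian_face_def)

text \<open>The field is differentiable at every point (x, 0, z) with x > 0 (both
  denominators are then nonzero), with the Jacobian above.\<close>
lemma igp_field_has_derivative_face:
  fixes x z :: real
  assumes "x > 0" "c > 0"
  shows "(igp_field b1 b2 b3 a11 a12 a13 a21 a23 a31 a32 c has_derivative
           igp_jacobian_face b1 b2 b3 a11 a12 a13 a21 a31 c x z) (at (pt3 x 0 z))"
proof (rule has_derivative_vec3)
  fix i :: 3
  have d1: "((\<lambda>u::real^3. (b1 - a11*u$1)*u$1 - a12*u$1*u$2 - a13*(u$1)^2*u$3 / (u$1 + c*u$2))
      has_derivative (\<lambda>h. (b1 - 2*a11*x - a13*z)*h$1 + (a13*c*z - a12*x)*h$2 - a13*x*h$3))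
      (at (pt3 x 0 z))"
    by (insert assms, rule has_derivative_eq_rhs, (rule derivative_intros)+)
       (use assms in \<open>auto simp: field_simps power2_eq_square\<close>)
  have d2: "((\<lambda>u::real^3. - b2*u$2 + a21*u$1*u$2 - a23*(u$2)^2*u$3 / (u$2 + c*u$1))
      has_derivative (\<lambda>h. (a21*x - b2)*h$2)) (at (pt3 x 0 z))"
    by (insert assms, rule has_derivative_eq_rhs, (rule derivative_intros)+)
       (use assms in \<open>auto simp: field_simps power2_eq_square\<close>)
  have d3: "((\<lambda>u::real^3. - b3*u$3 + a31*(u$1)^2*u$3 / (u$1 + c*u$2) + a32*(u$2)^2*u$3 / (u$2 + c*u$1))
      has_derivative (\<lambda>h. a31*z*h$1 - a31*c*z*h$2 + (a31*x - b3)*h$3)) (at (pt3 x 0 z))"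
    by (insert assms, rule has_derivative_eq_rhs, (rule derivative_intros | simp)+)
       (use assms in \<open>auto simp: field_simps power2_eq_square\<close>)
  show "((\<lambda>u. igp_field b1 b2 b3 a11 a12 a13 a21 a23 a31 a32 c u $ i) has_derivative
         (\<lambda>h. igp_jacobian_face b1 b2 b3 a11 a12 a13 a21 a31 c x z h $ i)) (at (pt3 x 0 z))"
    using exhaust_3[of i] d1 d2 d3 by (auto simp: igp_field_nth igp_jacobian_face_nth)
qed

lemma igp_field_equilibrium_face:
  assumes "x > 0" and x_eq: "a31*x = b3" and z_eq: "a13*z = b1 - a11*x"
  shows "igp_field b1 b2 b3 a11 a12 a13 a21 a23 a31 a32 c (pt3 x 0 z) = 0"
proof -
  have "b1*x = (a11*x + a13*z)*x"
    using z_eq by simp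
  then have "b1*x = a11*(x*x) + a13*(x*z)"
    by (simp add: algebra_simps)
  then show ?thesis
    unfolding vec_eq_iff forall_3 using assms
    by (simp add: igp_field_nth power2_eq_square field_simps)
qed

lemma igp_jacobian_face_stable:
  fixes mu :: complex and v :: "complex^3"
  assumes pos: "a11 > 0" "a13 > 0" "a31 > 0" "x > 0" "z > 0"
    and x_eq: "a31*x = b3" and z_eq: "a13*z = b1 - a11*x"
    and invasion: "a21*x < b2"
    and eigen: "cmatrix (igp_jacobian_face b1 b2 b3 a11 a12 a13 a21 a31 c x z) *v v = mu *s v"
    and "v \<noteq> 0"
  shows "Re mu < 0"
proof -
  let ?J = "igp_jacobian_face b1 b2 b3 a11 a12 a13 a21 a31 c x z"
  have row: "(\<Sum>j\<in>UNIV. complex_of_real (?J (axis j 1) $ i) * v $ j) = mu * v $ i" for i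
    using arg_cong[OF eigen, of "\<lambda>w. w $ i"] by (simp add: cmatrix_mult_nth)
  have row1: "of_real (a13*c*z - a12*x) * v$2 - of_real (a11*x) * v$1 - of_real (a13*x) * v$3
      = mu * v$1"
    using row[of 1] z_eq
    by (simp add: sum_3 axis_def igp_jacobian_face_nth algebra_simps)
  have row2: "of_real (a21*x - b2) * v$2 = mu * v$2"
    using row[of 2] by (simp add: sum_3 axis_def igp_jacobian_face_nth algebra_simps)
  have row3: "of_real (a31*z) * v$1 + of_real (- a31*c*z) * v$2 = mu * v$3"
    using row[of 3] x_eq by (simp add: sum_3 axis_def igp_jacobian_face_nth algebra_simps)
  have "v$1 \<noteq> 0 \<or> v$2 \<noteq> 0 \<or> v$3 \<noteq> 0"
    using \<open>v \<noteq> 0\<close> by (auto simp: vec_eq_iff forall_3)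
  from eigenvalue_Re_neg[OF _ _ _ _ row1 row2 row3 this] show ?thesis
    using pos invasion by simp
qed

theorem mainTheorem2:
  fixes b1 b2 b3 a11 a12 a13 a21 a23 a31 a32 c :: real
  assumes pos: "b1 > 0" "b2 > 0" "b3 > 0" "a11 > 0" "a12 > 0" "a13 > 0"
      "a21 > 0" "a23 > 0" "a31 > 0" "a32 > 0" "c > 0"
    and h: "a31 * b1 > a11 * b3"
  defines "x2 \<equiv> b3 / a31"
    and "z2 \<equiv> (b1 - a11 * (b3 / a31)) / a13"
    and "F \<equiv> igp_field b1 b2 b3 a11 a12 a13 a21 a23 a31 a32 c"
  shows "z2 > 0 \<and> F (pt3 x2 0 z2) = 0 \<and>
         (a31 * b2 > a21 * b3 \<longrightarrow>
            F differentiable (at (pt3 x2 0 z2)) \<and>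
            (\<forall>J. (F has_derivative J) (at (pt3 x2 0 z2)) \<longrightarrow>
               (\<forall>(mu::complex) (v::complex^3). v \<noteq> 0 \<and> cmatrix J *v v = mu *s v \<longrightarrow> Re mu < 0)))"
proof -
  have x2: "x2 > 0" and x_eq: "a31 * x2 = b3"
    using pos by (simp_all add: x2_def)
  have z2: "z2 > 0"
    using pos h by (simp add: z2_def field_simps)
  have z_eq: "a13 * z2 = b1 - a11 * x2"
    using pos by (simp add: z2_def x2_def)
  define J2 where "J2 = igp_jacobian_face b1 b2 b3 a11 a12 a13 a21 a31 c x2 z2"
  have DF: "(F has_derivative J2) (at (pt3 x2 0 z2))"
    unfolding F_def J2_def using igp_field_has_derivative_face x2 pos(11) .
  have "Re mu < 0"
    if "a31 * b2 > a21 * b3" "(F has_derivative J) (at (pt3 x2 0 z2))"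
       "v \<noteq> 0" "cmatrix J *v v = mu *s v" for J mu v
  proof -
    have "J = J2" using has_derivative_unique[OF that(2) DF] .
    moreover have "a21 * x2 < b2"
      using that(1) pos by (simp add: x2_def field_simps)
    ultimately show ?thesis
      using igp_jacobian_face_stable[OF pos(4,6,9) x2 z2 x_eq z_eq] that(3,4)
      unfolding J2_def by blast
  qed
  moreover have "F (pt3 x2 0 z2) = 0"
    unfolding F_def using igp_field_equilibrium_face[OF x2 x_eq z_eq] .
  ultimately show ?thesis
    using z2 DF by (auto simp: differentiable_def)
qed

end
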